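(* For all $n\in\mathbb N$ and all integers $d\geq 1$, $$\sum_{k=0}^nU_{d-1}\circ T_{(d+1)^k}\prod_{j=0}^k\frac{1}{U_d\circ T_{(d+1)^j}}=\frac{U_{(d+1)^{n+1}-2}}{U_{(d+1)^{n+1}-1}}$$ as rational fractions in $x$.
   Context: $T_n=T_n(x)$ and $U_n=U_n(x)$ denote the Chebyshev polynomials of the first and second kind, defined by $T_0=1$, $T_1=x$, $T_{n+1}=2xT_n-T_{n-1}$ and $U_0=1$, $U_1=2x$, $U_{n+1}=2xU_n-U_{n-1}$ for $n\geq1$. The symbol $\circ$ denotes composition of polynomials. *)

theory Defs
  imports "HOL-Computational_Algebra.Polynomial" "HOL-Computational_Algebra.Fraction_Field"
begin

fun chebT :: "nat \<Rightarrow> real poly" where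
  "chebT 0 = 1"
| "chebT (Suc 0) = [:0, 1:]"
| "chebT (Suc (Suc n)) = [:0, 2:] * chebT (Suc n) - chebT n"

fun chebU :: "nat \<Rightarrow> real poly" where
  "chebU 0 = 1"
| "chebU (Suc 0) = [:0, 2:]"
| "chebU (Suc (Suc n)) = [:0, 2:] * chebU (Suc n) - chebU n"

definition ratfun :: "real poly \<Rightarrow> real poly fract" where
  "ratfun p = Fract p 1"

end

theory Submission
  imports Defs
begin

text \<open>
  Under \<open>x = cos t\<close> one has \<open>T_n(cos t) = cos (n t)\<close> and \<open>U_(n-1)(cos t) sin t = sin (n t)\<close>,
  so polynomial identities between Chebyshev polynomials reduce to trigonometric ones on
  \<open>0 < t < pi\<close>.  The composition rule \<open>(U_(m-1) \<circ> T_k) U_(k-1) = U_(mk-1)\<close> makes the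
  product \<open>\<Prod>j\<le>k. U_d \<circ> T_((d+1)^j)\<close> telescope to \<open>U_((d+1)^(k+1)-1)\<close>, so with
  \<open>N = (d+1)^k\<close> the \<open>k\<close>-th summand is \<open>(U_(d-1) \<circ> T_N) / U_((d+1)N-1)\<close>.  The exchange
  identity \<open>U_(M-2) U_(N-1) - U_(N-2) U_(M-1) = U_(M-N-1)\<close>, together with the composition
  rule once more, shows that adding this summand to \<open>U_(N-2) / U_(N-1)\<close> gives
  \<open>U_(M-2) / U_(M-1)\<close> for \<open>M = (d+1)N\<close>; induction on \<open>n\<close> finishes the proof.
\<close>

lemma ratfun_mult: "ratfun (p * q) = ratfun p * ratfun q"
  by (simp add: ratfun_def)

lemma ratfun_add: "ratfun (p + q) = ratfun p + ratfun q"
  by (simp add: ratfun_def)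

lemma ratfun_1 [simp]: "ratfun 1 = 1"
  by (simp add: ratfun_def One_fract_def)

lemma ratfun_eq_0_iff [simp]: "ratfun p = 0 \<longleftrightarrow> p = 0"
  by (simp add: ratfun_def Zero_fract_def eq_fract)

lemma ratfun_prod: "ratfun (\<Prod>i\<in>A. f i) = (\<Prod>i\<in>A. ratfun (f i))"
  by (induction A rule: infinite_finite_induct) (simp_all add: ratfun_mult)

lemma poly_chebT_cos: "poly (chebT n) (cos t) = cos (real n * t)"
proof (induction n rule: chebT.induct)
  case (3 n)
  have "cos (real (Suc (Suc n)) * t) = 2 * cos t * cos (real (Suc n) * t) - cos (real n * t)"
    using cos_add[of "real (Suc n) * t" t] cos_diff[of "real (Suc n) * t" t]
    by (simp add: algebra_simps)
  with 3 show ?case by simp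
qed simp_all

lemma poly_chebU_cos_mult_sin: "poly (chebU n) (cos t) * sin t = sin (real (Suc n) * t)"
proof (induction n rule: chebU.induct)
  case 2
  then show ?case by (simp add: sin_double)
next
  case (3 n)
  have "poly (chebU (Suc (Suc n))) (cos t) * sin t
      = 2 * cos t * (poly (chebU (Suc n)) (cos t) * sin t) - poly (chebU n) (cos t) * sin t"
    by (simp add: algebra_simps)
  also have "\<dots> = 2 * cos t * sin (real (Suc (Suc n)) * t) - sin (real (Suc n) * t)"
    using 3 by simp
  also have "\<dots> = sin (real (Suc (Suc (Suc n))) * t)"
    using sin_add[of "real (Suc (Suc n)) * t" t] sin_diff[of "real (Suc (Suc n)) * t" t]
    by (simp add: algebra_simps)
  finally show ?case .
qed simp

lemma poly_eqI_cos:
  fixes p q :: "real poly"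
  assumes "\<And>t. 0 < t \<Longrightarrow> t < pi \<Longrightarrow> poly p (cos t) = poly q (cos t)"
  shows "p = q"
proof (rule ccontr)
  assume "p \<noteq> q"
  then have "finite {x. poly (p - q) x = 0}"
    by (intro poly_roots_finite) simp
  moreover have "{-1<..<1} \<subseteq> {x. poly (p - q) x = 0}"
  proof
    fix x :: real
    assume "x \<in> {-1<..<1}"
    then have "0 < arccos x" "arccos x < pi" "cos (arccos x) = x"
      using arccos_lt_bounded[of x] by auto
    then show "x \<in> {x. poly (p - q) x = 0}"
      using assms[of "arccos x"] by simp
  qed
  ultimately have "finite {-1<..<1 :: real}"
    by (rule finite_subset[rotated])
  then show False
    by (simp add: infinite_Ioo)
qed

lemma poly_eqI_cos_mult_sin:
  fixes p q :: "real poly"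
  assumes "\<And>t. poly p (cos t) * sin t = poly q (cos t) * sin t"
  shows "p = q"
proof (rule poly_eqI_cos)
  fix t :: real
  assume "0 < t" "t < pi"
  then have "sin t \<noteq> 0"
    using sin_gt_zero by force
  then show "poly p (cos t) = poly q (cos t)"
    using assms[of t] by simp
qed

lemma chebU_pcompose_chebT:
  "pcompose (chebU m) (chebT (Suc k)) * chebU k = chebU (m * Suc k + k)"
proof (rule poly_eqI_cos_mult_sin)
  fix t :: real
  have "poly (pcompose (chebU m) (chebT (Suc k)) * chebU k) (cos t) * sin t
      = poly (chebU m) (cos (real (Suc k) * t)) * sin (real (Suc k) * t)"
    by (simp add: poly_pcompose poly_chebT_cos poly_chebU_cos_mult_sin mult.assoc)
  also have "\<dots> = sin (real (Suc m) * (real (Suc k) * t))"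
    by (rule poly_chebU_cos_mult_sin)
  also have "\<dots> = sin (real (Suc (m * Suc k + k)) * t)"
    by (simp add: algebra_simps)
  also have "\<dots> = poly (chebU (m * Suc k + k)) (cos t) * sin t"
    by (simp add: poly_chebU_cos_mult_sin)
  finally show "poly (pcompose (chebU m) (chebT (Suc k)) * chebU k) (cos t) * sin t
      = poly (chebU (m * Suc k + k)) (cos t) * sin t" .
qed

lemma prod_chebU_pcompose_chebT_power:
  "(\<Prod>j<k. pcompose (chebU d) (chebT ((d + 1) ^ j))) = chebU ((d + 1) ^ k - 1)"
proof (induction k)
  case (Suc k)
  obtain K where K: "(d + 1) ^ k = Suc K"
    using not0_implies_Suc[of "(d + 1) ^ k"] by auto
  have "(\<Prod>j<Suc k. pcompose (chebU d) (chebT ((d + 1) ^ j)))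
      = pcompose (chebU d) (chebT (Suc K)) * chebU K"
    using Suc K by (simp add: mult.commute)
  also have "\<dots> = chebU (d * Suc K + K)"
    by (rule chebU_pcompose_chebT)
  also have "d * Suc K + K = (d + 1) ^ Suc k - 1"
    using K by simp
  finally show ?case .
qed simp

lemma chebU_exchange:
  "chebU (i + j + 1) * chebU (i + 1) = chebU i * chebU (i + j + 2) + chebU j"
proof (rule poly_eqI_cos_mult_sin)
  fix t :: real
  define a b where "a = real (i + 2) * t" and "b = real (i + j + 3) * t"
  have sines: "poly (chebU (i + j + 1)) (cos t) * sin t = sin (b - t)"
    "poly (chebU (i + 1)) (cos t) * sin t = sin a"
    "poly (chebU i) (cos t) * sin t = sin (a - t)"
    "poly (chebU (i + j + 2)) (cos t) * sin t = sin b"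
    "poly (chebU j) (cos t) * sin t = sin (b - a)"
    unfolding a_def b_def poly_chebU_cos_mult_sin by (simp_all add: algebra_simps)
  have "sin (b - t) * sin a = sin (a - t) * sin b + sin (b - a) * sin t"
    by (simp add: sin_diff algebra_simps)
  then have "(poly (chebU (i + j + 1)) (cos t) * sin t) * (poly (chebU (i + 1)) (cos t) * sin t)
      = (poly (chebU i) (cos t) * sin t) * (poly (chebU (i + j + 2)) (cos t) * sin t)
        + (poly (chebU j) (cos t) * sin t) * sin t"
    by (simp only: sines)
  then have "(poly (chebU (i + j + 1) * chebU (i + 1)) (cos t) * sin t) * sin t
      = (poly (chebU i * chebU (i + j + 2) + chebU j) (cos t) * sin t) * sin t"
    by (simp add: algebra_simps)
  then show "poly (chebU (i + j + 1) * chebU (i + 1)) (cos t) * sin t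
      = poly (chebU i * chebU (i + j + 2) + chebU j) (cos t) * sin t"
    by (cases "sin t = 0") simp_all
qed

lemma chebU_ne_0: "chebU n \<noteq> 0"
proof -
  have "poly (chebU n) 1 = real n + 1"
    by (induction n rule: chebU.induct) simp_all
  then show ?thesis
    by (metis poly_0 of_nat_0_le_iff add_nonneg_pos zero_less_one less_irrefl)
qed

lemma prod_inverse_ratfun_chebU_pcompose:
  "(\<Prod>j=0..k. inverse (ratfun (pcompose (chebU d) (chebT ((d + 1) ^ j)))))
     = inverse (ratfun (chebU ((d + 1) ^ Suc k - 1)))"
proof -
  have "(\<Prod>j=0..k. inverse (ratfun (pcompose (chebU d) (chebT ((d + 1) ^ j)))))
      = inverse (\<Prod>j<Suc k. ratfun (pcompose (chebU d) (chebT ((d + 1) ^ j))))"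
    using prod_inversef[of "\<lambda>j. ratfun (pcompose (chebU d) (chebT ((d + 1) ^ j)))" "{..<Suc k}"]
    by (simp add: o_def atLeast0AtMost lessThan_Suc_atMost)
  also have "\<dots> = inverse (ratfun (chebU ((d + 1) ^ Suc k - 1)))"
    by (simp only: ratfun_prod [symmetric] prod_chebU_pcompose_chebT_power)
  finally show ?thesis .
qed

lemma chebU_ratio_step:
  fixes d N :: nat
  assumes "d \<ge> 1" "N \<ge> 2"
  shows "ratfun (chebU (N - 2)) / ratfun (chebU (N - 1))
           + ratfun (pcompose (chebU (d - 1)) (chebT N)) / ratfun (chebU ((d + 1) * N - 1))
         = ratfun (chebU ((d + 1) * N - 2)) / ratfun (chebU ((d + 1) * N - 1))"
proof -
  obtain i e where N: "N = i + 2" and d: "d = e + 1"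
    using assms by (metis add.commute le_Suc_ex one_add_one add_2_eq_Suc)
  define j where "j = e * Suc (Suc i) + Suc i"
  have indices: "N - 2 = i" "N - 1 = i + 1" "(d + 1) * N - 1 = i + j + 2"
    "(d + 1) * N - 2 = i + j + 1" "d - 1 = e"
    unfolding N d j_def by (simp_all add: algebra_simps)
  have comp: "pcompose (chebU e) (chebT N) * chebU (i + 1) = chebU j"
    using chebU_pcompose_chebT[of e "Suc i"] unfolding N j_def by simp
  have "ratfun (chebU i) * ratfun (chebU (i + j + 2))
        + ratfun (pcompose (chebU e) (chebT N)) * ratfun (chebU (i + 1))
      = ratfun (chebU (i + j + 1)) * ratfun (chebU (i + 1))"
    using chebU_exchange[of i j] comp by (simp add: ratfun_mult [symmetric] ratfun_add [symmetric])
  then have "ratfun (chebU i) / ratfun (chebU (i + 1))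
        + ratfun (pcompose (chebU e) (chebT N)) / ratfun (chebU (i + j + 2))
      = ratfun (chebU (i + j + 1)) * ratfun (chebU (i + 1))
        / (ratfun (chebU (i + 1)) * ratfun (chebU (i + j + 2)))"
    by (simp add: add_frac_eq chebU_ne_0 mult.commute del: chebU.simps)
  then show ?thesis
    unfolding indices by (simp add: chebU_ne_0 del: chebU.simps)
qed

theorem theorem1p3:
  fixes n d :: nat
  assumes "d \<ge> 1"
  shows "(\<Sum>k=0..n. ratfun (pcompose (chebU (d - 1)) (chebT ((d + 1) ^ k)))
            * (\<Prod>j=0..k. inverse (ratfun (pcompose (chebU d) (chebT ((d + 1) ^ j))))))
         = ratfun (chebU ((d + 1) ^ (n + 1) - 2)) / ratfun (chebU ((d + 1) ^ (n + 1) - 1))"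
proof (induction n)
  case 0
  have "d + 1 - 2 = d - 1"
    by simp
  then show ?case
    by (simp add: divide_inverse prod_inverse_ratfun_chebU_pcompose)
next
  case (Suc n)
  define N where "N = (d + 1) ^ (n + 1)"
  have "d + 1 \<le> N"
    unfolding N_def by (rule self_le_power) simp_all
  then have "N \<ge> 2"
    using assms by simp
  have "(\<Sum>k=0..Suc n. ratfun (pcompose (chebU (d - 1)) (chebT ((d + 1) ^ k)))
            * (\<Prod>j=0..k. inverse (ratfun (pcompose (chebU d) (chebT ((d + 1) ^ j))))))
      = ratfun (chebU (N - 2)) / ratfun (chebU (N - 1))
        + ratfun (pcompose (chebU (d - 1)) (chebT N)) / ratfun (chebU ((d + 1) * N - 1))"
    unfolding sum.atLeast0_atMost_Suc Suc.IH
    using prod_inverse_ratfun_chebU_pcompose[of d "Suc n"]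
    by (simp add: N_def divide_inverse del: prod.atLeast0_atMost_Suc)
  also have "\<dots> = ratfun (chebU ((d + 1) * N - 2)) / ratfun (chebU ((d + 1) * N - 1))"
    using \<open>N \<ge> 2\<close> by (rule chebU_ratio_step[OF assms])
  finally show ?case
    by (simp add: N_def)
qed

end
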